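(* Let $N$ be a perfect planar network in an annulus, drawn (after an isotopy) so that no internal vertex lies on the cut $\rho$, and let $\bar w_e=w_e\lambda^{\mathrm{ind}(e)}$ be the modified edge weights, so that $w_P=(-1)^{c(C_P)-1}\prod_{e\in P}\bar w_e$ for every path $P$ between boundary vertices. Regard each boundary measurement $M(i,j)$, for a source $b_i$ and a sink $b_j$, as the formal power series $\sum_P w_P$ in the commuting indeterminates $\bar w_e$, $e\in E$, with integer coefficients, the sum over all paths $P$ from $b_i$ to $b_j$. Then each boundary measurement is a rational function of the modified weights $\bar w_e$, $e\in E$ (i.e. the formal series equals the expansion of a rational function with integer coefficients).
   Context: A perfect planar network in an annulus $N=(G,\rho,w)$ consists of the following data. $G=(V,E)$ is a directed graph embedded in an annulus, considered up to isotopy relative to the boundary. Exactly $n$ of its vertices lie on the boundary circles (boundary vertices): $n_1\ge 0$ on the outer circle and $n_2=n-n_1\ge 0$ on the inner circle. Each boundary vertex is either a source (exactly one outgoing edge, no incoming edges) or a sink (exactly one incoming edge, no outgoing edges). Every internal vertex has degree $3$ and is either white (exactly one incoming edge) or black (exactly one outgoing edge). A cut $\rho$ is an oriented non-self-intersecting curve from a base point on the inner circle to a base point on the outer circle, both base points distinct from the boundary vertices, considered up to isotopy relative to its endpoints. For an oriented curve $\gamma$ with endpoints off $\rho$, $\mathrm{ind}(\gamma)$ denotes the algebraic intersection number of $\gamma$ with $\rho$. Each edge $e$ carries a weight $w_e$. A path is a sequence of edges $(e_1,\dots,e_r)$ with $e_i=(v_i,v_{i+1})$; edges may repeat. For a closed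 piecewise smooth curve $C$ without cusps, the concordance number $c(C)\in\mathbb Z/2\mathbb Z$ is its rotation number mod 2 (equivalently: approximate $C$ by a closed polygon, fix a generic oriented line $l$, and count mod 2 the pairs of consecutive segments $(e',e'')$ such that the direction vector of $l$ lies in the interior of the cone spanned by $e',e''$). For a path $P$ from a source $b'$ to a sink $b''$, $C_P$ is the closed curve obtained by appending to $P$: if $b',b''$ lie on the same circle, the counterclockwise arc of that circle from $b''$ to $b'$; otherwise, the curve going from $b''$ counterclockwise along its circle to the base point of $\rho$, then along $\rho$ to the other base point, then counterclockwise along the other circle to $b'$. The weight of $P$ is $w_P(\lambda)=(-1)^{c(C_P)-1}\lambda^{\mathrm{ind}(P)}\prod_{e\in P}w_e$ (product with multiplicity), $\lambda$ an independent variable. The boundary measurement $M(i,j)$ is the sum of $w_P$ over all paths from $b_i$ to $b_j$. *)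

theory Defs
  imports "HOL-Analysis.Analysis"
begin

definition annulus :: "complex set" where
  "annulus = {z. 1 \<le> cmod z \<and> cmod z \<le> 2}"

definition on_boundary :: "complex \<Rightarrow> bool" where
  "on_boundary z \<longleftrightarrow> cmod z = 1 \<or> cmod z = 2"

fun polyline :: "complex list \<Rightarrow> real \<Rightarrow> complex" where
  "polyline [] = linepath 0 0"
| "polyline [p] = linepath p p"
| "polyline [p, q] = linepath p q"
| "polyline (p # q # r # xs) = linepath p q +++ polyline (q # r # xs)"

text \<open>Edges have type 'e, vertices type 'v (both finite). tail/head give the
orientation, pos the position of a vertex, bends e the interior corner points
of the polygonal drawing of edge e, rho the list of corner points of the cut
(from the inner base point to the outer base point).\<close>

definition edge_points ::
  "('e \<Rightarrow> 'v) \<Rightarrow> ('e \<Rightarrow> 'v) \<Rightarrow> ('v \<Rightarrow> complex) \<Rightarrow> ('e \<Rightarrow> complex list) \<Rightarrow> 'e \<Rightarrow> complex list" where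
  "edge_points tail head pos bends e = pos (tail e) # bends e @ [pos (head e)]"

definition indeg :: "('e::finite \<Rightarrow> 'v) \<Rightarrow> 'v \<Rightarrow> nat" where
  "indeg head v = card {e. head e = v}"

definition outdeg :: "('e::finite \<Rightarrow> 'v) \<Rightarrow> 'v \<Rightarrow> nat" where
  "outdeg tail v = card {e. tail e = v}"

definition perfect_planar_network ::
  "('e::finite \<Rightarrow> 'v::finite) \<Rightarrow> ('e \<Rightarrow> 'v) \<Rightarrow> ('v \<Rightarrow> complex) \<Rightarrow> ('e \<Rightarrow> complex list)
    \<Rightarrow> complex list \<Rightarrow> bool" where
  "perfect_planar_network tail head pos bends rho \<longleftrightarrow>
     inj pos \<and> (\<forall>v. pos v \<in> annulus)
     \<comment> \<open>boundary vertices (those on the circles) are sources or sinks\<close>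
   \<and> (\<forall>v. on_boundary (pos v) \<longrightarrow>
          (outdeg tail v = 1 \<and> indeg head v = 0) \<or> (indeg head v = 1 \<and> outdeg tail v = 0))
     \<comment> \<open>internal vertices: degree 3, white (one incoming) or black (one outgoing)\<close>
   \<and> (\<forall>v. \<not> on_boundary (pos v) \<longrightarrow>
          indeg head v + outdeg tail v = 3 \<and> (indeg head v = 1 \<or> outdeg tail v = 1))
     \<comment> \<open>embedding of the edges in the annulus\<close>
   \<and> (\<forall>e. path_image (polyline (edge_points tail head pos bends e)) \<subseteq> annulus)
   \<and> (\<forall>e. \<forall>z \<in> path_image (polyline (edge_points tail head pos bends e)).
          on_boundary z \<longrightarrow> z = pos (tail e) \<or> z = pos (head e))
   \<and> (\<forall>e. if tail e = head e then simple_path (polyline (edge_points tail head pos bends e))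
          else arc (polyline (edge_points tail head pos bends e)))
   \<and> (\<forall>e e'. e \<noteq> e' \<longrightarrow>
          path_image (polyline (edge_points tail head pos bends e)) \<inter>
          path_image (polyline (edge_points tail head pos bends e'))
          \<subseteq> pos ` ({tail e, head e} \<inter> {tail e', head e'}))
   \<and> (\<forall>v e. pos v \<in> path_image (polyline (edge_points tail head pos bends e)) \<longrightarrow>
          v = tail e \<or> v = head e)
     \<comment> \<open>the cut: a simple curve from the inner circle to the outer circle\<close>
   \<and> length rho \<ge> 2 \<and> arc (polyline rho) \<and> path_image (polyline rho) \<subseteq> annulus
   \<and> cmod (List.hd rho) = 1 \<and> cmod (last rho) = 2
   \<and> List.hd rho \<notin> range pos \<and> last rho \<notin> range pos"

definition is_path :: "('e \<Rightarrow> 'v) \<Rightarrow> ('e \<Rightarrow> 'v) \<Rightarrow> 'e list \<Rightarrow> 'v \<Rightarrow> 'v \<Rightarrow> bool" where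
  "is_path tail head P a b \<longleftrightarrow> P \<noteq> [] \<and> tail (List.hd P) = a \<and> head (last P) = b \<and>
     (\<forall>k. Suc k < length P \<longrightarrow> head (P ! k) = tail (P ! Suc k))"

text \<open>Seg p q: straight segment from p to q.  Arc p q: arc of the circle centred
at 0 through p (|p| = |q|), traversed counterclockwise from p to q.\<close>

datatype piece = Seg complex complex | Arc complex complex

fun start_dir :: "piece \<Rightarrow> complex" where
  "start_dir (Seg p q) = q - p"
| "start_dir (Arc p q) = \<i> * p"

fun end_dir :: "piece \<Rightarrow> complex" where
  "end_dir (Seg p q) = q - p"
| "end_dir (Arc p q) = \<i> * q"

definition ccw_sweep :: "complex \<Rightarrow> complex \<Rightarrow> real" where
  "ccw_sweep p q = (if Arg (q / p) \<le> 0 then Arg (q / p) + 2 * pi else Arg (q / p))"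

fun piece_turn :: "piece \<Rightarrow> real" where
  "piece_turn (Seg p q) = 0"
| "piece_turn (Arc p q) = ccw_sweep p q"

definition corner_turn :: "complex \<Rightarrow> complex \<Rightarrow> real" where
  "corner_turn u v = Arg (v / u)"

definition next_piece :: "piece list \<Rightarrow> nat \<Rightarrow> piece" where
  "next_piece ps k = ps ! (Suc k mod length ps)"

definition no_cusps :: "piece list \<Rightarrow> bool" where
  "no_cusps ps \<longleftrightarrow> ps \<noteq> [] \<and> (\<forall>k < length ps.
      end_dir (ps ! k) \<noteq> 0 \<and> start_dir (ps ! k) \<noteq> 0 \<and>
      corner_turn (end_dir (ps ! k)) (start_dir (next_piece ps k)) \<noteq> pi)"

definition total_turning :: "piece list \<Rightarrow> real" where
  "total_turning ps = (\<Sum>k < length ps. piece_turn (ps ! k) +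
      corner_turn (end_dir (ps ! k)) (start_dir (next_piece ps k)))"

definition rotation_number :: "piece list \<Rightarrow> int" where
  "rotation_number ps = round (total_turning ps / (2 * pi))"

text \<open>concordance number in Z/2Z, represented by 0 or 1\<close>
definition concordance :: "piece list \<Rightarrow> int" where
  "concordance ps = rotation_number ps mod 2"

fun segs :: "complex list \<Rightarrow> piece list" where
  "segs (p # q # xs) = Seg p q # segs (q # xs)"
| "segs _ = []"

definition closing_pieces :: "complex list \<Rightarrow> complex \<Rightarrow> complex \<Rightarrow> piece list" where
  "closing_pieces rho src snk =
     (if cmod src = cmod snk then [Arc snk src]
      else if cmod snk = 1 then [Arc snk (List.hd rho)] @ segs rho @ [Arc (last rho) src]
      else [Arc snk (last rho)] @ segs (rev rho) @ [Arc (List.hd rho) src])"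

definition C_P :: "('e \<Rightarrow> 'v) \<Rightarrow> ('e \<Rightarrow> 'v) \<Rightarrow> ('v \<Rightarrow> complex) \<Rightarrow> ('e \<Rightarrow> complex list)
    \<Rightarrow> complex list \<Rightarrow> 'e list \<Rightarrow> piece list" where
  "C_P tail head pos bends rho P =
     concat (map (\<lambda>e. segs (edge_points tail head pos bends e)) P)
     @ closing_pieces rho (pos (tail (List.hd P))) (pos (head (last P)))"

definition path_sign :: "('e \<Rightarrow> 'v) \<Rightarrow> ('e \<Rightarrow> 'v) \<Rightarrow> ('v \<Rightarrow> complex) \<Rightarrow> ('e \<Rightarrow> complex list)
    \<Rightarrow> complex list \<Rightarrow> 'e list \<Rightarrow> int" where
  "path_sign tail head pos bends rho P =
     (if concordance (C_P tail head pos bends rho P) = 1 then 1 else -1)"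

text \<open>A series is a map from monomials (exponent vectors 'e => nat) to integer
coefficients; a polynomial is a series of finite support.\<close>

type_synonym 'e series = "('e \<Rightarrow> nat) \<Rightarrow> int"

definition series_mult :: "'e::finite series \<Rightarrow> 'e series \<Rightarrow> 'e series" where
  "series_mult f g = (\<lambda>m. \<Sum>a \<in> {a. \<forall>e. a e \<le> m e}. f a * g (\<lambda>e. m e - a e))"

definition is_polynomial :: "'e series \<Rightarrow> bool" where
  "is_polynomial f \<longleftrightarrow> finite {m. f m \<noteq> 0}"

definition rational_series :: "'e::finite series \<Rightarrow> bool" where
  "rational_series M \<longleftrightarrow> (\<exists>p q. is_polynomial p \<and> is_polynomial q \<and> q \<noteq> (\<lambda>_. 0)
       \<and> series_mult q M = p)"

text \<open>Boundary measurement as a formal series in the modified weights: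
coefficient of the monomial m is the sum of the signs of all paths from a to b
using each edge e exactly m e times.\<close>
definition boundary_measurement_series ::
  "('e::finite \<Rightarrow> 'v) \<Rightarrow> ('e \<Rightarrow> 'v) \<Rightarrow> ('v \<Rightarrow> complex) \<Rightarrow> ('e \<Rightarrow> complex list)
    \<Rightarrow> complex list \<Rightarrow> 'v \<Rightarrow> 'v \<Rightarrow> 'e series" where
  "boundary_measurement_series tail head pos bends rho a b =
     (\<lambda>m. \<Sum>P \<in> {P. is_path tail head P a b \<and> (\<forall>e. count_list P e = m e)}.
            path_sign tail head pos bends rho P)"

end

theory Submission
  imports Defs Jordan_Normal_Form.Determinant
begin

(* Write the closed curve C_P of a path P as the cyclic list of its pieces
   (the segments of the edges of P followed by the closing pieces).  Its total turning is
   the sum, over consecutive pairs of pieces (p, q), of the turning along p plus the corner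
   angle from p to q; after subtracting Arg of the start directions, which telescopes,
   every such pair contributes an integer multiple of 2 pi.  Hence the sign
   (-1)^(c(C_P)-1) is a product of local signs of consecutive pieces, and so it factors as
   alpha(first edge) * prod A(e, e') over consecutive edges * beta(last edge) with integer
   weights alpha, A, beta that vanish unless the edges are correctly concatenated.

   The boundary measurement is therefore a "word series"
       sum over nonempty words P in the edges of  alpha(hd P) * prod A(P_k, P_(k+1)) * beta(last P),
   and every such series is rational: the series G_e of words starting with e satisfy the
   linear system G_e = x_e (beta e + sum_e' A(e,e') G_e'), whose matrix I - (x_e A(e,e'))
   has polynomial entries and a determinant with constant term 1.  Cramer's rule
   (det M * G = adj M * b) then shows that det M * G_e is a polynomial. *)

section \<open>Formal power series in finitely many commuting indeterminates\<close>

definition below :: "('e \<Rightarrow> nat) \<Rightarrow> ('e \<Rightarrow> nat) set" where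
  "below m = {a. \<forall>e. a e \<le> m e}"

lemma finite_below[simp]: "finite (below (m::'e::finite \<Rightarrow> nat))"
proof -
  have "below m \<subseteq> PiE UNIV (\<lambda>e. {..m e})" by (auto simp: below_def PiE_UNIV_domain)
  moreover have "finite (PiE UNIV (\<lambda>e. {..m e}))" by (rule finite_PiE) auto
  ultimately show ?thesis by (rule finite_subset)
qed

lemma series_mult_below: "series_mult f g m = (\<Sum>a\<in>below m. f a * g (\<lambda>e. m e - a e))"
  by (simp add: series_mult_def below_def)

text \<open>Commutativity: reflect the splitting a + (m - a) of m.\<close>
lemma series_mult_comm: "series_mult f (g::'e::finite series) = series_mult g f"
proof (rule ext)
  fix m
  show "series_mult f g m = series_mult g f m"
    unfolding series_mult_below
    by (rule sum.reindex_bij_witness[where i="\<lambda>a e. m e - a e" and j="\<lambda>a e. m e - a e"])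
       (auto simp: below_def fun_eq_iff)
qed

text \<open>Associativity: both sides sum over all splittings m = b + c + d.\<close>
lemma series_mult_assoc:
  "series_mult (series_mult f g) h = series_mult f (series_mult g (h::'e::finite series))"
proof (rule ext)
  fix m
  let ?t = "\<lambda>b c. f b * (g c * h (\<lambda>e. m e - b e - c e))"
  have "series_mult (series_mult f g) h m
      = (\<Sum>a\<in>below m. \<Sum>b\<in>below a. f b * g (\<lambda>e. a e - b e) * h (\<lambda>e. m e - a e))"
    unfolding series_mult_below by (simp add: sum_distrib_right)
  also have "\<dots> = (\<Sum>(a,b)\<in>Sigma (below m) below. f b * g (\<lambda>e. a e - b e) * h (\<lambda>e. m e - a e))"
    by (rule sum.Sigma) auto
  also have "\<dots> = (\<Sum>(b,c)\<in>Sigma (below m) (\<lambda>b. below (\<lambda>e. m e - b e)). ?t b c)"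
    by (rule sum.reindex_bij_witness[where i="\<lambda>(b,c). ((\<lambda>e. b e + c e), b)"
                                         and j="\<lambda>(a,b). (b, (\<lambda>e. a e - b e))"])
       (auto simp: below_def fun_eq_iff le_diff_conv2 add.commute intro: diff_le_mono, meson le_trans)
  also have "\<dots> = (\<Sum>b\<in>below m. \<Sum>c\<in>below (\<lambda>e. m e - b e). ?t b c)"
    by (rule sum.Sigma[symmetric]) auto
  also have "\<dots> = series_mult f (series_mult g h) m"
    unfolding series_mult_below by (simp add: sum_distrib_left)
  finally show "series_mult (series_mult f g) h m = series_mult f (series_mult g h) m" .
qed

definition one_series :: "'e series" where
  "one_series = (\<lambda>m. if m = (\<lambda>_. 0) then 1 else 0)"

lemma series_mult_one: "series_mult one_series (g::'e::finite series) = g"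
proof (rule ext)
  fix m
  have "series_mult one_series g m = (\<Sum>a\<in>below m. if a = (\<lambda>_. 0) then g m else 0)"
    unfolding series_mult_below one_series_def by (rule sum.cong) auto
  also have "\<dots> = g m" by (subst sum.delta) (simp, simp add: below_def)
  finally show "series_mult one_series g m = g m" .
qed

lemma series_mult_distrib:
  "series_mult (\<lambda>m. f m + g m) (h::'e::finite series) = (\<lambda>m. series_mult f h m + series_mult g h m)"
  by (rule ext) (simp add: series_mult_below distrib_right sum.distrib)

text \<open>A type copy of the coefficient functions, so that the series form a commutative
  ring and the determinant theory of matrices over a ring becomes available.\<close>

typedef 'e ser = "UNIV :: (('e::finite \<Rightarrow> nat) \<Rightarrow> int) set" morphisms coef Ser by auto

declare Ser_inverse[simp] coef_inverse[simp]

lemma ser_eq_iff: "f = g \<longleftrightarrow> coef f = coef g" by (simp add: coef_inject)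

instantiation ser :: (finite) comm_ring_1
begin
definition "0 = Ser (\<lambda>_. 0)"
definition "1 = Ser one_series"
definition "f + g = Ser (\<lambda>m. coef f m + coef g m)"
definition "f - g = Ser (\<lambda>m. coef f m - coef g m)"
definition "- f = Ser (\<lambda>m. - coef f m)"
definition "f * g = Ser (series_mult (coef f) (coef g))"
instance
proof
  fix a b c :: "'a ser"
  show "a * b * c = a * (b * c)" by (simp add: times_ser_def series_mult_assoc)
  show "a * b = b * a" by (simp add: times_ser_def series_mult_comm)
  show "1 * a = a" by (simp add: times_ser_def one_ser_def series_mult_one)
  show "(a + b) * c = a * c + b * c" by (simp add: times_ser_def plus_ser_def series_mult_distrib)
  show "a + b + c = a + (b + c)" by (simp add: plus_ser_def add.assoc)
  show "a + b = b + a" by (simp add: plus_ser_def add.commute)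
  show "0 + a = a" by (simp add: plus_ser_def zero_ser_def)
  show "- a + a = 0" by (simp add: plus_ser_def zero_ser_def uminus_ser_def)
  show "a - b = a + - b" by (simp add: plus_ser_def minus_ser_def uminus_ser_def)
  have "coef (0::'a ser) (\<lambda>_. 0) \<noteq> coef 1 (\<lambda>_. 0)"
    by (simp add: zero_ser_def one_ser_def one_series_def)
  then show "(0::'a ser) \<noteq> 1" by metis
qed
end

lemma coef_zero: "coef 0 m = 0"
  by (simp add: zero_ser_def)

lemma coef_add: "coef (f + g) m = coef f m + coef g m"
  by (simp add: plus_ser_def)

lemma coef_sum: "coef (sum f S) m = (\<Sum>x\<in>S. coef (f x) m)"
  by (induct S rule: infinite_finite_induct) (auto simp: coef_add coef_zero)

lemma coef_mult: "coef (f * g) m = (\<Sum>a\<in>below m. coef f a * coef g (\<lambda>e. m e - a e))"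
  by (simp add: times_ser_def series_mult_below)

text \<open>The constant term is a ring homomorphism to the integers; it detects that
  determinants of the form det (I - X A) are nonzero.\<close>

definition const_term :: "'e::finite ser \<Rightarrow> int" where
  "const_term f = coef f (\<lambda>_. 0)"

lemma below_zero: "below (\<lambda>_. 0) = {\<lambda>_. 0}"
  by (auto simp: below_def)

interpretation const_term: comm_ring_hom const_term
  by unfold_locales (simp_all add: const_term_def zero_ser_def one_ser_def one_series_def
      coef_mult plus_ser_def below_zero)

definition poly_ser :: "'e::finite ser \<Rightarrow> bool" where
  "poly_ser f \<longleftrightarrow> is_polynomial (coef f)"

lemma poly_ser_0[simp]: "poly_ser 0"
  by (simp add: poly_ser_def is_polynomial_def zero_ser_def)

lemma poly_ser_1[simp]: "poly_ser 1"
proof -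
  have "{m. one_series m \<noteq> (0::int)} \<subseteq> {\<lambda>_. 0}" by (auto simp: one_series_def split: if_splits)
  then show ?thesis by (auto simp: poly_ser_def is_polynomial_def one_ser_def intro: finite_subset)
qed

lemma poly_ser_add[simp]: "poly_ser f \<Longrightarrow> poly_ser g \<Longrightarrow> poly_ser (f + g)"
proof -
  assume "poly_ser f" "poly_ser g"
  moreover have "{m. coef f m + coef g m \<noteq> 0} \<subseteq> {m. coef f m \<noteq> 0} \<union> {m. coef g m \<noteq> 0}" by auto
  ultimately show ?thesis by (auto simp: poly_ser_def is_polynomial_def plus_ser_def intro: finite_subset)
qed

lemma poly_ser_uminus[simp]: "poly_ser f \<Longrightarrow> poly_ser (- f)"
  by (simp add: poly_ser_def is_polynomial_def uminus_ser_def)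

lemma poly_ser_diff[simp]: "poly_ser f \<Longrightarrow> poly_ser g \<Longrightarrow> poly_ser (f - g)"
  by (metis poly_ser_add poly_ser_uminus diff_conv_add_uminus)

text \<open>A nonzero coefficient of f * g sits at a sum of monomials in the supports of f and g.\<close>
lemma poly_ser_mult[simp]:
  assumes pf: "poly_ser f" and pg: "poly_ser g"
  shows "poly_ser (f * g)"
proof -
  let ?sums = "(\<lambda>(a,b). \<lambda>e. a e + b e) ` ({a. coef f a \<noteq> 0} \<times> {b. coef g b \<noteq> 0})"
  have "{m. coef (f * g) m \<noteq> 0} \<subseteq> ?sums"
  proof
    fix m assume "m \<in> {m. coef (f * g) m \<noteq> 0}"
    then obtain a where a: "a \<in> below m" "coef f a * coef g (\<lambda>e. m e - a e) \<noteq> 0"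
      unfolding coef_mult by (auto elim: sum.not_neutral_contains_not_neutral)
    have "m = (\<lambda>e. a e + (m e - a e))" using a(1) by (auto simp: below_def fun_eq_iff)
    then show "m \<in> ?sums" using a(2) by (intro image_eqI[where x="(a, \<lambda>e. m e - a e)"]) auto
  qed
  moreover have "finite ?sums" using pf pg by (simp add: poly_ser_def is_polynomial_def)
  ultimately show ?thesis by (auto simp: poly_ser_def is_polynomial_def intro: finite_subset)
qed

lemma poly_ser_sum: "(\<And>x. x \<in> F \<Longrightarrow> poly_ser (f x)) \<Longrightarrow> poly_ser (sum f F)"
  by (induct F rule: infinite_finite_induct) auto

lemma poly_ser_prod: "(\<And>x. x \<in> F \<Longrightarrow> poly_ser (f x)) \<Longrightarrow> poly_ser (prod f F)"
  by (induct F rule: infinite_finite_induct) auto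

lemma poly_ser_power[simp]: "poly_ser f \<Longrightarrow> poly_ser (f ^ k)"
  by (induct k) auto

lemma poly_ser_det:
  assumes "\<And>i j. i < dim_row A \<Longrightarrow> j < dim_col A \<Longrightarrow> poly_ser (A $$ (i,j))"
  shows "poly_ser (det (A :: 'e::finite ser mat))"
proof -
  have "poly_ser (signof p :: 'e ser)" for p by (cases p rule: sign_cases) auto
  then show ?thesis
    unfolding det_def using assms
    by (auto intro!: poly_ser_sum poly_ser_mult poly_ser_prod simp: permutes_def)
qed

text \<open>Adjugate entries are signed minors.\<close>
lemma poly_ser_adj:
  assumes A: "A \<in> carrier_mat n n" and "\<And>i j. i < n \<Longrightarrow> j < n \<Longrightarrow> poly_ser (A $$ (i,j))"
    and "i < n" "j < n"
  shows "poly_ser (adj_mat (A :: 'e::finite ser mat) $$ (i,j))"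
proof -
  have "adj_mat A $$ (i,j) = (-1)^(j+i) * det (mat_delete A j i)"
    using assms by (simp add: adj_mat_def cofactor_def)
  then show ?thesis using assms
    by (auto intro!: poly_ser_mult poly_ser_det simp: mat_delete_def)
qed

text \<open>Cramer's rule over the ring of series: if M g = b with M and b polynomial, then
  det M * g is polynomial, since det M * g = adj M * b.\<close>
lemma cramer_poly_ser:
  fixes M :: "'e::finite ser mat" and g b :: "'e ser vec"
  assumes M: "M \<in> carrier_mat n n" and g: "g \<in> carrier_vec n" and Mg: "M *\<^sub>v g = b"
    and M_poly: "\<And>i j. i < n \<Longrightarrow> j < n \<Longrightarrow> poly_ser (M $$ (i,j))"
    and b_poly: "\<And>i. i < n \<Longrightarrow> poly_ser (b $ i)"
    and k: "k < n"
  shows "poly_ser (det M * g $ k)"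
proof -
  have adj: "adj_mat M \<in> carrier_mat n n" "adj_mat M * M = det M \<cdot>\<^sub>m 1\<^sub>m n"
    using adj_mat[OF M] by auto
  have "det M * g $ k = (\<Sum>l\<in>{0..<n}. (if k = l then det M * g $ l else 0))"
    using k by simp
  also have "\<dots> = (\<Sum>l\<in>{0..<n}. det M * (if l = k then 1 else 0) * g $ l)"
    by (rule sum.cong) auto
  also have "\<dots> = ((det M \<cdot>\<^sub>m 1\<^sub>m n) *\<^sub>v g) $ k"
    using k g by (simp add: scalar_prod_def)
  also have "\<dots> = (adj_mat M *\<^sub>v b) $ k"
    using adj Mg assoc_mult_mat_vec[OF adj(1) M g] by simp
  also have "\<dots> = (\<Sum>l\<in>{0..<n}. adj_mat M $$ (k,l) * b $ l)"
    using k adj(1) Mg M by (auto simp: scalar_prod_def)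
  finally have "det M * g $ k = (\<Sum>l\<in>{0..<n}. adj_mat M $$ (k,l) * b $ l)" .
  then show ?thesis
    using k by (auto intro!: poly_ser_sum poly_ser_mult poly_ser_adj[OF M M_poly] b_poly)
qed

definition unit_exp :: "'e \<Rightarrow> 'e \<Rightarrow> nat" where
  "unit_exp e = (\<lambda>x. if x = e then 1 else 0)"

text \<open>The indeterminate x_e (the modified weight of the edge e) and the integer constants.\<close>
definition indet :: "'e::finite \<Rightarrow> 'e ser" where
  "indet e = Ser (\<lambda>m. if m = unit_exp e then 1 else 0)"

definition const_ser :: "int \<Rightarrow> 'e::finite ser" where
  "const_ser c = Ser (\<lambda>m. if m = (\<lambda>_. 0) then c else 0)"

lemma sum_below_single:
  fixes m :: "'e::finite \<Rightarrow> nat"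
  assumes "b \<in> below m"
  shows "(\<Sum>a\<in>below m. (if a = b then c else 0) * h a) = (c * h b :: int)"
proof -
  have "(\<Sum>a\<in>below m. (if a = b then c else 0) * h a) = (\<Sum>a\<in>below m. if a = b then c * h b else 0)"
    by (rule sum.cong) auto
  also have "\<dots> = c * h b" using assms by simp
  finally show ?thesis .
qed

lemma coef_const_ser: "coef (const_ser c) m = (if m = (\<lambda>_. 0) then c else 0)"
  by (simp add: const_ser_def)

lemma coef_const_ser_mult: "coef (const_ser c * f) m = c * coef f m"
proof -
  have "coef (const_ser c * f) m = (\<Sum>a\<in>below m. (if a = (\<lambda>_. 0) then c else 0) * coef f (\<lambda>e. m e - a e))"
    by (simp add: coef_mult const_ser_def)
  also have "\<dots> = c * coef f (\<lambda>e. m e - 0)"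
    by (rule sum_below_single[where h="\<lambda>a. coef f (\<lambda>e. m e - a e)"]) (simp add: below_def)
  finally show ?thesis by simp
qed

lemma coef_indet_mult:
  "coef (indet e * f) m = (if 1 \<le> m e then coef f (\<lambda>x. m x - unit_exp e x) else 0)"
proof (cases "1 \<le> m e")
  case True
  then have "unit_exp e \<in> below m" by (auto simp: below_def unit_exp_def)
  then show ?thesis using True
    by (simp add: coef_mult indet_def sum_below_single[where h="\<lambda>a. coef f (\<lambda>x. m x - a x)"])
next
  case False
  then have "a \<noteq> unit_exp e" if "a \<in> below m" for a
    using that by (auto simp: below_def unit_exp_def fun_eq_iff) (metis One_nat_def)
  then show ?thesis using False by (auto simp: coef_mult indet_def intro!: sum.neutral)
qed

lemma poly_ser_indet[simp]: "poly_ser (indet e)"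
proof -
  have "{m. coef (indet e) m \<noteq> 0} \<subseteq> {unit_exp e}" by (auto simp: indet_def split: if_splits)
  then show ?thesis by (auto simp: poly_ser_def is_polynomial_def intro: finite_subset)
qed

lemma poly_ser_const_ser[simp]: "poly_ser (const_ser c)"
proof -
  have "{m. coef (const_ser c :: 'e::finite ser) m \<noteq> 0} \<subseteq> {\<lambda>_. 0}"
    by (auto simp: const_ser_def split: if_splits)
  then show ?thesis by (auto simp: poly_ser_def is_polynomial_def intro: finite_subset)
qed

lemma const_term_indet[simp]: "const_term (indet e) = 0"
  by (auto simp: const_term_def indet_def unit_exp_def fun_eq_iff)

section \<open>Word series are rational\<close>

fun chain_weight :: "('a \<Rightarrow> 'a \<Rightarrow> 'b::comm_semiring_1) \<Rightarrow> 'a list \<Rightarrow> 'b" where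
  "chain_weight A (a # b # xs) = A a b * chain_weight A (b # xs)"
| "chain_weight A _ = 1"

definition words :: "('e \<Rightarrow> nat) \<Rightarrow> 'e list set" where
  "words m = {P. P \<noteq> [] \<and> (\<forall>x. count_list P x = m x)}"

definition words_from :: "'e \<Rightarrow> ('e \<Rightarrow> nat) \<Rightarrow> 'e list set" where
  "words_from e m = {P \<in> words m. hd P = e}"

text \<open>Words with given multiplicities have bounded length, so there are finitely many.\<close>
lemma finite_words[simp]: "finite (words (m::'e::finite \<Rightarrow> nat))"
proof -
  have "words m \<subseteq> {P. set P \<subseteq> UNIV \<and> length P \<le> sum m UNIV}"
  proof (safe, simp)
    fix P :: "'e list" assume "P \<in> words m"
    then have "sum (count_list P) UNIV = sum m UNIV" by (simp add: words_def)
    then show "length P \<le> sum m UNIV" using sum_count_set[of P UNIV] by simp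
  qed
  moreover have "finite {P::'e list. set P \<subseteq> UNIV \<and> length P \<le> sum m UNIV}"
    by (rule finite_lists_length_le) simp
  ultimately show ?thesis by (rule finite_subset)
qed

lemma finite_words_from[simp]: "finite (words_from (e::'e::finite) m)"
  by (simp add: words_from_def)

lemma words_Union: "words m = (\<Union>e. words_from e m)"
  by (auto simp: words_from_def)

lemma words_from_split:
  "words_from e (\<lambda>x. m x + unit_exp e x) =
     (if m = (\<lambda>_. 0) then {[e]} else {}) \<union> (Cons e) ` (\<Union>e'. words_from e' m)"
proof (intro equalityI subsetI)
  fix P assume "P \<in> words_from e (\<lambda>x. m x + unit_exp e x)"
  then obtain P' where P: "P = e # P'" and c: "\<forall>x. count_list P x = m x + unit_exp e x"
    by (auto simp: words_from_def words_def neq_Nil_conv)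
  have c': "count_list P' x = m x" for x
    using c[rule_format, of x] by (auto simp: P unit_exp_def split: if_splits)
  show "P \<in> (if m = (\<lambda>_. 0) then {[e]} else {}) \<union> (Cons e) ` (\<Union>e'. words_from e' m)"
    using c' P by (cases P') (auto simp: words_from_def words_def fun_eq_iff)
next
  fix P assume "P \<in> (if m = (\<lambda>_. 0) then {[e]} else {}) \<union> (Cons e) ` (\<Union>e'. words_from e' m)"
  then show "P \<in> words_from e (\<lambda>x. m x + unit_exp e x)"
    by (auto simp: words_from_def words_def unit_exp_def split: if_splits)
qed

definition word_series :: "('e \<Rightarrow> int) \<Rightarrow> ('e \<Rightarrow> 'e \<Rightarrow> int) \<Rightarrow> ('e \<Rightarrow> int) \<Rightarrow> 'e series" where
  "word_series \<alpha> A \<beta> = (\<lambda>m. \<Sum>P\<in>words m. \<alpha> (hd P) * chain_weight A P * \<beta> (last P))"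

definition words_from_series :: "('e \<Rightarrow> 'e \<Rightarrow> int) \<Rightarrow> ('e \<Rightarrow> int) \<Rightarrow> 'e::finite \<Rightarrow> 'e ser" where
  "words_from_series A \<beta> e = Ser (\<lambda>m. \<Sum>P\<in>words_from e m. chain_weight A P * \<beta> (last P))"

text \<open>Sorting words by their first letter: F = sum_e alpha(e) G_e.\<close>
lemma word_series_decomp:
  "Ser (word_series \<alpha> A \<beta>) = (\<Sum>e\<in>UNIV. const_ser (\<alpha> e) * words_from_series A \<beta> e)"
proof (subst ser_eq_iff, rule ext)
  fix m :: "'a \<Rightarrow> nat"
  have "word_series \<alpha> A \<beta> m
      = (\<Sum>e\<in>UNIV. \<Sum>P\<in>words_from e m. \<alpha> (hd P) * chain_weight A P * \<beta> (last P))"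
    unfolding word_series_def words_Union
    by (rule sum.UNION_disjoint) (simp, simp, auto simp: words_from_def)
  also have "\<dots> = (\<Sum>e\<in>UNIV. \<alpha> e * (\<Sum>P\<in>words_from e m. chain_weight A P * \<beta> (last P)))"
    by (auto simp: sum_distrib_left words_from_def mult.assoc intro!: sum.cong)
  finally show "coef (Ser (word_series \<alpha> A \<beta>)) m
      = coef (\<Sum>e\<in>UNIV. const_ser (\<alpha> e) * words_from_series A \<beta> e) m"
    by (simp add: coef_sum coef_const_ser_mult words_from_series_def)
qed

lemma words_from_series_rec:
  "words_from_series A \<beta> e =
     indet e * (const_ser (\<beta> e) + (\<Sum>e'\<in>UNIV. const_ser (A e e') * words_from_series A \<beta> e'))"
proof (subst ser_eq_iff, rule ext)
  fix m
  let ?G = "\<lambda>e m. \<Sum>P\<in>words_from e m. chain_weight A P * \<beta> (last P)"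
  show "coef (words_from_series A \<beta> e) m = coef (indet e * (const_ser (\<beta> e) +
          (\<Sum>e'\<in>UNIV. const_ser (A e e') * words_from_series A \<beta> e'))) m"
  proof (cases "1 \<le> m e")
    case False
    have "P \<notin> words_from e m" for P
    proof
      assume "P \<in> words_from e m"
      then have "e \<in> set P" "count_list P e = m e"
        by (auto simp: words_from_def words_def intro: hd_in_set[of P, simplified])
      then show False using False count_list_0_iff[of P e] by simp
    qed
    then have "words_from e m = {}" by blast
    then show ?thesis using False by (simp add: coef_indet_mult words_from_series_def)
  next
    case True
    define m' where "m' = (\<lambda>x. m x - unit_exp e x)"
    have m: "m = (\<lambda>x. m' x + unit_exp e x)"
      using True by (auto simp: m'_def unit_exp_def fun_eq_iff)
    have "?G e m = (\<Sum>P\<in>(if m' = (\<lambda>_. 0) then {[e]} else {}). chain_weight A P * \<beta> (last P))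
        + (\<Sum>P\<in>(Cons e) ` (\<Union>e'. words_from e' m'). chain_weight A P * \<beta> (last P))"
      unfolding m words_from_split
      by (rule sum.union_disjoint) (simp, simp, auto simp: words_from_def words_def)
    also have "(\<Sum>P\<in>(Cons e) ` (\<Union>e'. words_from e' m'). chain_weight A P * \<beta> (last P))
        = (\<Sum>P\<in>(\<Union>e'. words_from e' m'). chain_weight A (e # P) * \<beta> (last (e # P)))"
      by (subst sum.reindex) auto
    also have "\<dots> = (\<Sum>e'\<in>UNIV. \<Sum>P\<in>words_from e' m'. chain_weight A (e # P) * \<beta> (last (e # P)))"
      by (rule sum.UNION_disjoint) (simp, simp, auto simp: words_from_def)
    also have "\<dots> = (\<Sum>e'\<in>UNIV. A e e' * ?G e' m')"
      by (auto simp: sum_distrib_left words_from_def words_def neq_Nil_conv intro!: sum.cong)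
    finally show ?thesis using True
      by (simp add: coef_indet_mult coef_add coef_sum coef_const_ser_mult coef_const_ser
          words_from_series_def m'_def[symmetric])
  qed
qed

lemma transfer_matrix_equation:
  fixes A :: "'e::finite \<Rightarrow> 'e \<Rightarrow> int"
  assumes ed: "bij_betw ed {0..<n} (UNIV::'e set)"
  shows "mat n n (\<lambda>(k,l). (if k = l then 1 else 0) - indet (ed k) * const_ser (A (ed k) (ed l)))
           *\<^sub>v vec n (\<lambda>k. words_from_series A \<beta> (ed k))
         = vec n (\<lambda>k. indet (ed k) * const_ser (\<beta> (ed k)))"
  (is "?M *\<^sub>v ?g = ?b")
proof (rule eq_vecI)
  show "dim_vec (?M *\<^sub>v ?g) = dim_vec ?b" by simp
  fix k assume "k < dim_vec ?b"
  then have k: "k < n" by simp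
  let ?G = "words_from_series A \<beta>"
  let ?T = "\<lambda>e. indet (ed k) * (const_ser (A (ed k) e) * ?G e)"
  have unit: "(if k = l then 1 else 0) * ?G (ed l) = (if k = l then ?G (ed l) else 0)" for l
    by simp
  have "(?M *\<^sub>v ?g) $ k = (\<Sum>l\<in>{0..<n}. (if k = l then ?G (ed l) else 0)) - (\<Sum>l\<in>{0..<n}. ?T (ed l))"
    using k by (simp add: scalar_prod_def left_diff_distrib sum_subtractf mult.assoc unit)
  also have "(\<Sum>l\<in>{0..<n}. ?T (ed l)) = (\<Sum>e\<in>UNIV. ?T e)"
    using sum.reindex_bij_betw[OF ed] .
  also have "(\<Sum>l\<in>{0..<n}. (if k = l then ?G (ed l) else 0)) = indet (ed k) * const_ser (\<beta> (ed k)) + (\<Sum>e\<in>UNIV. ?T e)"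
    using k by (subst words_from_series_rec) (simp add: distrib_left sum_distrib_left)
  finally show "(?M *\<^sub>v ?g) $ k = ?b $ k" using k by simp
qed

text \<open>All the series G_e have a common polynomial denominator, namely det (I - (x_k A(k,l))),
  whose constant term is 1.\<close>
lemma words_from_series_denominator:
  fixes A :: "'e::finite \<Rightarrow> 'e \<Rightarrow> int"
  obtains D :: "'e ser" where "poly_ser D" "D \<noteq> 0" "\<And>e. poly_ser (D * words_from_series A \<beta> e)"
proof -
  obtain n and ed :: "nat \<Rightarrow> 'e" where ed: "bij_betw ed {0..<n} UNIV"
    using ex_bij_betw_nat_finite[of "UNIV::'e set"] by auto
  define M :: "'e ser mat" where
    "M = mat n n (\<lambda>(k,l). (if k = l then 1 else 0) - indet (ed k) * const_ser (A (ed k) (ed l)))"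
  define g where "g = vec n (\<lambda>k. words_from_series A \<beta> (ed k))"
  define b :: "'e ser vec" where "b = vec n (\<lambda>k. indet (ed k) * const_ser (\<beta> (ed k)))"
  have M: "M \<in> carrier_mat n n" and M_poly: "\<And>k l. k < n \<Longrightarrow> l < n \<Longrightarrow> poly_ser (M $$ (k,l))"
    by (auto simp: M_def)
  have Mg: "M *\<^sub>v g = b"
    unfolding M_def g_def b_def by (rule transfer_matrix_equation[OF ed])
  have "map_mat const_term M = 1\<^sub>m n"
    by (rule eq_matI) (auto simp: M_def const_term.hom_mult const_term.hom_minus)
  then have "const_term (det M) = 1" by (metis const_term.hom_det det_one)
  show thesis
  proof (rule that)
    show "poly_ser (det M)" by (rule poly_ser_det) (simp add: M_def)
    show "det M \<noteq> 0" using \<open>const_term (det M) = 1\<close> by auto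
    fix e
    obtain k where k: "k < n" "e = ed k"
      using ed by (metis atLeastLessThan_iff bij_betw_iff_bijections UNIV_I)
    have "poly_ser (det M * g $ k)"
      using cramer_poly_ser[OF M _ Mg M_poly] k by (auto simp: g_def b_def)
    then show "poly_ser (det M * words_from_series A \<beta> e)" using k by (simp add: g_def)
  qed
qed

theorem word_series_rational:
  "rational_series (word_series \<alpha> A \<beta> :: 'e::finite series)"
proof -
  obtain D :: "'e ser" where D: "poly_ser D" "D \<noteq> 0" "\<And>e. poly_ser (D * words_from_series A \<beta> e)"
    using words_from_series_denominator[where A=A and \<beta>=\<beta>] by blast
  have "poly_ser (D * Ser (word_series \<alpha> A \<beta>))"
    unfolding word_series_decomp sum_distrib_left
    by (rule poly_ser_sum) (metis mult.left_commute poly_ser_const_ser poly_ser_mult D(3))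
  moreover have "coef D \<noteq> (\<lambda>_. 0)" using D(2) by (simp add: ser_eq_iff zero_ser_def)
  ultimately show ?thesis
    unfolding rational_series_def using D(1)
    by (intro exI[of _ "coef (D * Ser (word_series \<alpha> A \<beta>))"] exI[of _ "coef D"])
       (auto simp: poly_ser_def times_ser_def)
qed

section \<open>The concordance number as a product of local signs\<close>

lemma Arg_div_int:
  assumes u: "u \<noteq> 0" and v: "v \<noteq> 0"
  shows "\<exists>n::int. Arg (v / u) - Arg v + Arg u = 2 * pi * n"
proof -
  have "cis (Arg (v / u)) = sgn v / sgn u" using u v by (simp add: cis_Arg sgn_divide)
  also have "\<dots> = cis (Arg v) / cis (Arg u)" using u v by (simp add: cis_Arg)
  also have "\<dots> = cis (Arg v - Arg u)" by (rule cis_divide)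
  finally have "sin (Arg (v / u)) = sin (Arg v - Arg u) \<and> cos (Arg (v / u)) = cos (Arg v - Arg u)"
    by (metis cis.sel(1) cis.sel(2))
  then obtain n :: int where "Arg (v / u) = Arg v - Arg u + 2 * pi * n"
    using sin_cos_eq_iff by blast
  then show ?thesis by (intro exI[of _ n]) simp
qed

lemma piece_turn_int:
  assumes "start_dir p \<noteq> 0" "end_dir p \<noteq> 0"
  shows "\<exists>n::int. piece_turn p - Arg (end_dir p) + Arg (start_dir p) = 2 * pi * n"
proof (cases p)
  case (Seg a b) then show ?thesis by (intro exI[of _ 0]) simp
next
  case (Arc a b)
  then have "\<i> * a \<noteq> 0" "\<i> * b \<noteq> 0" using assms by auto
  then obtain n :: int where n: "Arg ((\<i> * b) / (\<i> * a)) - Arg (\<i> * b) + Arg (\<i> * a) = 2 * pi * n"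
    using Arg_div_int by blast
  have "(\<i> * b) / (\<i> * a) = b / a" by simp
  then show ?thesis using n Arc
    by (cases "Arg (b / a) \<le> 0")
       (auto simp: ccw_sweep_def algebra_simps intro: exI[of _ "n + 1"] exI[of _ n])
qed

text \<open>The contribution of a piece p followed by q to the total turning, normalised by
  Arg of the start directions so that it becomes an integer (by the two lemmas above);
  the normalisation telescopes around a closed curve.\<close>
definition local_turn :: "piece \<Rightarrow> piece \<Rightarrow> real" where
  "local_turn p q = (piece_turn p + corner_turn (end_dir p) (start_dir q)
                     - Arg (start_dir q) + Arg (start_dir p)) / (2 * pi)"

lemma local_turn_int:
  assumes "start_dir p \<noteq> 0" "end_dir p \<noteq> 0" "start_dir q \<noteq> 0"
  shows "local_turn p q = of_int (round (local_turn p q))"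
proof -
  obtain n1 :: int where n1: "piece_turn p - Arg (end_dir p) + Arg (start_dir p) = 2 * pi * n1"
    using piece_turn_int assms by blast
  obtain n2 :: int where n2: "Arg (start_dir q / end_dir p) - Arg (start_dir q) + Arg (end_dir p) = 2 * pi * n2"
    using Arg_div_int assms by blast
  have "local_turn p q = of_int (n1 + n2)"
    unfolding local_turn_def corner_turn_def using n1 n2 by (simp add: field_simps)
  then show ?thesis by (metis round_of_int)
qed

lemma sum_cyclic_shift:
  assumes "n > 0"
  shows "(\<Sum>k<n. f (Suc k mod n)) = (\<Sum>k<n. (f k :: real))"
proof -
  obtain n' where n: "n = Suc n'" using assms by (cases n) auto
  have "(\<Sum>k<Suc n'. f (Suc k mod Suc n')) = (\<Sum>k<n'. f (Suc k)) + f 0"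
    by (simp add: sum.lessThan_Suc)
  also have "\<dots> = (\<Sum>k<Suc n'. f k)"
    by (subst sum.lessThan_Suc_shift) simp
  finally show ?thesis using n by simp
qed

text \<open>The normalising Arg terms telescope around the closed curve.\<close>
lemma total_turning_local:
  assumes "ps \<noteq> []"
  shows "total_turning ps = 2 * pi * (\<Sum>k<length ps. local_turn (ps ! k) (next_piece ps k))"
proof -
  let ?n = "length ps"
  let ?a = "\<lambda>k. Arg (start_dir (ps ! k))"
  have "total_turning ps
      = (\<Sum>k<?n. 2 * pi * local_turn (ps ! k) (next_piece ps k) + (?a (Suc k mod ?n) - ?a k))"
    unfolding total_turning_def by (rule sum.cong) (auto simp: local_turn_def next_piece_def)
  also have "\<dots> = 2 * pi * (\<Sum>k<?n. local_turn (ps ! k) (next_piece ps k))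
                  + ((\<Sum>k<?n. ?a (Suc k mod ?n)) - (\<Sum>k<?n. ?a k))"
    by (simp add: sum.distrib sum_subtractf sum_distrib_left)
  also have "(\<Sum>k<?n. ?a (Suc k mod ?n)) = (\<Sum>k<?n. ?a k)"
    using assms by (intro sum_cyclic_shift) simp
  finally show ?thesis by simp
qed

lemma rotation_number_local:
  assumes nc: "no_cusps ps"
  shows "rotation_number ps = (\<Sum>k<length ps. round (local_turn (ps ! k) (next_piece ps k)))"
proof -
  have ne: "ps \<noteq> []" using nc by (simp add: no_cusps_def)
  have each: "local_turn (ps ! k) (next_piece ps k) = of_int (round (local_turn (ps ! k) (next_piece ps k)))"
    if k: "k < length ps" for k
  proof (rule local_turn_int)
    show "start_dir (ps ! k) \<noteq> 0" "end_dir (ps ! k) \<noteq> 0" using nc k by (auto simp: no_cusps_def)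
    have "Suc k mod length ps < length ps" using ne by simp
    then show "start_dir (next_piece ps k) \<noteq> 0" using nc by (auto simp: no_cusps_def next_piece_def)
  qed
  have "total_turning ps / (2 * pi) = (\<Sum>k<length ps. local_turn (ps ! k) (next_piece ps k))"
    using total_turning_local[OF ne] by simp
  also have "\<dots> = of_int (\<Sum>k<length ps. round (local_turn (ps ! k) (next_piece ps k)))"
    using each by simp
  finally show ?thesis unfolding rotation_number_def by (metis round_of_int)
qed

definition parity_sign :: "int \<Rightarrow> int" where
  "parity_sign z = (if even z then 1 else -1)"

lemma parity_sign_sum: "parity_sign (sum f S) = (\<Prod>x\<in>S. parity_sign (f x))"
  by (induct S rule: infinite_finite_induct) (auto simp: parity_sign_def)

definition corner_sign :: "piece \<Rightarrow> piece \<Rightarrow> int" where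
  "corner_sign p q = parity_sign (round (local_turn p q))"

lemma chain_weight_prod: "chain_weight f xs = (\<Prod>k<length xs - 1. f (xs ! k) (xs ! Suc k))"
proof (induction f xs rule: chain_weight.induct)
  case (1 A a b xs)
  have "length (a # b # xs) - 1 = Suc (length xs)" by simp
  then show ?case using 1 by (simp del: prod.lessThan_Suc add: prod.lessThan_Suc_shift)
qed auto

lemma cyclic_prod_chain_weight:
  assumes "xs \<noteq> []"
  shows "(\<Prod>k<length xs. f (xs ! k) (xs ! (Suc k mod length xs))) = chain_weight f xs * f (last xs) (hd xs)"
proof -
  obtain n' where n: "length xs = Suc n'" using assms by (cases xs) auto
  have "(\<Prod>k<Suc n'. f (xs ! k) (xs ! (Suc k mod Suc n')))
      = (\<Prod>k<n'. f (xs ! k) (xs ! Suc k)) * f (xs ! n') (xs ! 0)"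
    by (simp add: prod.lessThan_Suc)
  also have "(\<Prod>k<n'. f (xs ! k) (xs ! Suc k)) = chain_weight f xs" using n by (simp add: chain_weight_prod)
  also have "xs ! n' = last xs" using n assms by (simp add: last_conv_nth)
  also have "xs ! 0 = hd xs" using assms by (simp add: hd_conv_nth)
  finally show ?thesis using n by simp
qed

lemma concordance_sign:
  assumes nc: "no_cusps ps"
  shows "(if concordance ps = 1 then 1 else -1) = - chain_weight corner_sign ps * corner_sign (last ps) (hd ps)"
proof -
  have ne: "ps \<noteq> []" using nc by (simp add: no_cusps_def)
  have "(if concordance ps = 1 then 1 else -1) = - parity_sign (rotation_number ps)"
    by (auto simp: concordance_def parity_sign_def) presburger+
  also have "parity_sign (rotation_number ps)
      = (\<Prod>k<length ps. corner_sign (ps ! k) (ps ! (Suc k mod length ps)))"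
    by (simp add: rotation_number_local[OF nc] parity_sign_sum corner_sign_def next_piece_def)
  also have "\<dots> = chain_weight corner_sign ps * corner_sign (last ps) (hd ps)"
    by (rule cyclic_prod_chain_weight[OF ne])
  finally show ?thesis by simp
qed

lemma chain_weight_append:
  "xs \<noteq> [] \<Longrightarrow> ys \<noteq> [] \<Longrightarrow> chain_weight f (xs @ ys) = chain_weight f xs * f (last xs) (hd ys) * chain_weight f ys"
proof (induction xs)
  case (Cons a xs)
  then show ?case by (cases xs; cases ys) (auto simp: mult.assoc)
qed simp

lemma chain_weight_concat:
  assumes "P \<noteq> []" "\<And>e. S e \<noteq> []"
  shows "concat (map S P) \<noteq> [] \<and> hd (concat (map S P)) = hd (S (hd P))
     \<and> last (concat (map S P)) = last (S (last P))
     \<and> chain_weight f (concat (map S P))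
         = chain_weight (\<lambda>e e'. chain_weight f (S e) * f (last (S e)) (hd (S e'))) P
           * chain_weight f (S (last P))"
  using assms(1)
proof (induction P)
  case (Cons e P)
  show ?case
  proof (cases P)
    case Nil then show ?thesis using assms(2) by simp
  next
    case (Cons e' r)
    with Cons.IH have IH: "concat (map S P) \<noteq> [] \<and> hd (concat (map S P)) = hd (S (hd P))
      \<and> last (concat (map S P)) = last (S (last P))
      \<and> chain_weight f (concat (map S P))
          = chain_weight (\<lambda>e e'. chain_weight f (S e) * f (last (S e)) (hd (S e'))) P
            * chain_weight f (S (last P))"
      by simp
    then show ?thesis
      using assms(2) Cons chain_weight_append[of "S e" "concat (map S P)" f]
      by (simp add: mult.assoc)
  qed
qed simp

lemma chain_weight_mask:
  "chain_weight (\<lambda>e e'. if R e e' then f e e' else 0) P =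
     (if (\<forall>k. Suc k < length P \<longrightarrow> R (P ! k) (P ! Suc k)) then chain_weight f P else 0)"
proof (induction P rule: induct_list012)
  case (3 a b r)
  have "(\<forall>k. Suc k < length (a # b # r) \<longrightarrow> R ((a # b # r) ! k) ((a # b # r) ! Suc k))
     \<longleftrightarrow> R a b \<and> (\<forall>k. Suc k < length (b # r) \<longrightarrow> R ((b # r) ! k) ((b # r) ! Suc k))"
    by (auto simp: less_Suc_eq_0_disj All_less_Suc2)
  then show ?case using 3 by auto
qed auto

section \<open>The sign of a path factors into local weights\<close>

context
  fixes tail head :: "'e::finite \<Rightarrow> 'v" and pos :: "'v \<Rightarrow> complex"
    and bends :: "'e \<Rightarrow> complex list" and rho :: "complex list"
begin

definition edge_pieces :: "'e \<Rightarrow> piece list" where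
  "edge_pieces e = segs (edge_points tail head pos bends e)"

lemma edge_pieces_nonempty: "edge_pieces e \<noteq> []"
  by (cases "bends e") (auto simp: edge_pieces_def edge_points_def)

definition edge_transfer :: "'e \<Rightarrow> 'e \<Rightarrow> int" where
  "edge_transfer e e' = (if head e = tail e' then
      chain_weight corner_sign (edge_pieces e) * corner_sign (last (edge_pieces e)) (hd (edge_pieces e'))
    else 0)"

text \<open>For paths from i to j: the first edge carries the corner sign where the closing
  curve meets it (and the global sign -1), the last edge its own corner signs and those
  of the closing curve.\<close>
definition source_weight :: "'v \<Rightarrow> 'v \<Rightarrow> 'e \<Rightarrow> int" where
  "source_weight i j e = (if tail e = i then
      - corner_sign (last (closing_pieces rho (pos i) (pos j))) (hd (edge_pieces e))
    else 0)"

definition sink_weight :: "'v \<Rightarrow> 'v \<Rightarrow> 'e \<Rightarrow> int" where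
  "sink_weight i j e = (let CL = closing_pieces rho (pos i) (pos j) in
     if head e = j then
       chain_weight corner_sign (edge_pieces e) * corner_sign (last (edge_pieces e)) (hd CL)
       * chain_weight corner_sign CL
     else 0)"

lemma path_sign_factorization:
  assumes P: "is_path tail head P i j" and nc: "no_cusps (C_P tail head pos bends rho P)"
  shows "path_sign tail head pos bends rho P
       = source_weight i j (hd P) * chain_weight edge_transfer P * sink_weight i j (last P)"
proof -
  define CL where "CL = closing_pieces rho (pos i) (pos j)"
  have CL_ne: "CL \<noteq> []" by (simp add: CL_def closing_pieces_def)
  have P_ne: "P \<noteq> []" and ends: "tail (hd P) = i" "head (last P) = j"
    using P by (auto simp: is_path_def)
  let ?E = "concat (map edge_pieces P)"
  have CP: "C_P tail head pos bends rho P = ?E @ CL"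
    using ends by (simp add: C_P_def edge_pieces_def[abs_def] CL_def)
  note E = chain_weight_concat[of P edge_pieces corner_sign, OF P_ne edge_pieces_nonempty]
  have transfer: "chain_weight edge_transfer P = chain_weight (\<lambda>e e'. chain_weight corner_sign (edge_pieces e)
      * corner_sign (last (edge_pieces e)) (hd (edge_pieces e'))) P"
    using P unfolding edge_transfer_def chain_weight_mask by (simp add: is_path_def)
  have "path_sign tail head pos bends rho P
      = - chain_weight corner_sign (?E @ CL) * corner_sign (last (?E @ CL)) (hd (?E @ CL))"
    unfolding path_sign_def using concordance_sign[OF nc] CP by simp
  also have "chain_weight corner_sign (?E @ CL)
      = chain_weight corner_sign ?E * corner_sign (last ?E) (hd CL) * chain_weight corner_sign CL"
    using E CL_ne by (intro chain_weight_append) auto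
  also have "last (?E @ CL) = last CL" using CL_ne by simp
  also have "hd (?E @ CL) = hd (edge_pieces (hd P))" using E by simp
  finally show ?thesis
    using E ends transfer by (simp add: source_weight_def sink_weight_def CL_def Let_def algebra_simps)
qed

lemma non_path_weight:
  assumes "P \<noteq> []" "\<not> is_path tail head P i j"
  shows "source_weight i j (hd P) * chain_weight edge_transfer P * sink_weight i j (last P) = 0"
  using assms unfolding edge_transfer_def chain_weight_mask
  by (auto simp: is_path_def source_weight_def sink_weight_def Let_def)

text \<open>Hence the boundary measurement is a word series: the words that are not paths from
  i to j contribute nothing.\<close>
lemma boundary_measurement_word_series:
  assumes nc: "\<And>P. is_path tail head P i j \<Longrightarrow> no_cusps (C_P tail head pos bends rho P)"
  shows "boundary_measurement_series tail head pos bends rho i j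
       = word_series (source_weight i j) edge_transfer (sink_weight i j)"
proof (rule ext)
  fix m :: "'e \<Rightarrow> nat"
  show "boundary_measurement_series tail head pos bends rho i j m
      = word_series (source_weight i j) edge_transfer (sink_weight i j) m"
    unfolding boundary_measurement_series_def word_series_def
  proof (rule sum.mono_neutral_cong_left)
    show "finite (words m)" by simp
    show "{P. is_path tail head P i j \<and> (\<forall>e. count_list P e = m e)} \<subseteq> words m"
      by (auto simp: is_path_def words_def)
    show "\<forall>P\<in>words m - {P. is_path tail head P i j \<and> (\<forall>e. count_list P e = m e)}.
        source_weight i j (hd P) * chain_weight edge_transfer P * sink_weight i j (last P) = 0"
      using non_path_weight by (auto simp: words_def)
    show "path_sign tail head pos bends rho P
        = source_weight i j (hd P) * chain_weight edge_transfer P * sink_weight i j (last P)"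
      if "P \<in> {P. is_path tail head P i j \<and> (\<forall>e. count_list P e = m e)}" for P
      using that nc path_sign_factorization by blast
  qed
qed

end

theorem proposition2p2:
  fixes tail head :: "'e::finite \<Rightarrow> 'v::finite"
    and pos :: "'v \<Rightarrow> complex" and bends :: "'e \<Rightarrow> complex list"
    and rho :: "complex list" and i j :: 'v
  assumes "perfect_planar_network tail head pos bends rho"
    and "\<forall>v. \<not> on_boundary (pos v) \<longrightarrow> pos v \<notin> path_image (polyline rho)"
    and "\<forall>P a b. on_boundary (pos a) \<and> outdeg tail a = 1 \<and> on_boundary (pos b) \<and> indeg head b = 1
            \<and> is_path tail head P a b \<longrightarrow> no_cusps (C_P tail head pos bends rho P)"
    and "on_boundary (pos i)" and "outdeg tail i = 1"
    and "on_boundary (pos j)" and "indeg head j = 1"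
  shows "rational_series (boundary_measurement_series tail head pos bends rho i j)"
proof -
  have "\<And>P. is_path tail head P i j \<Longrightarrow> no_cusps (C_P tail head pos bends rho P)"
    using assms(3-7) by blast
  then have "boundary_measurement_series tail head pos bends rho i j
      = word_series (source_weight tail head pos bends rho i j) (edge_transfer tail head pos bends)
                    (sink_weight tail head pos bends rho i j)"
    by (rule boundary_measurement_word_series)
  then show ?thesis using word_series_rational by simp
qed

end
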